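(* Consider the following two-bidder auction. A single good has common value $v$ with CDF $F_v$, density $f_v$, support $\mathbb{R}_+$ and finite mean, and $\mathbb{E}[v]>L\ge 0$. Alice submits a bid knowing only $F_v$; then $v$ is realized and Bob, observing $v$ but not Alice's bid, submits a bid. The highest bid wins and pays its bid (payoff $v$ minus bid) unless it is strictly below the limit price $L$, in which case the good is unsold. If the bids tie, Bob wins; if Bob's bid equals $L$ he can win; a winning bid of Alice equal exactly to $L$ results in no sale. Then there is no (perfect Bayesian Nash) equilibrium in which Alice uses a pure strategy.
   Context: Bidders are risk neutral. *)

theory Defs
  imports "HOL-Probability.Probability"
begin

definition bob_wins :: "real \<Rightarrow> real \<Rightarrow> real \<Rightarrow> bool" where
  "bob_wins L a b \<longleftrightarrow> b \<ge> a \<and> b \<ge> L"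

definition alice_wins :: "real \<Rightarrow> real \<Rightarrow> real \<Rightarrow> bool" where
  "alice_wins L a b \<longleftrightarrow> a > b \<and> a > L"

definition payA :: "real \<Rightarrow> real \<Rightarrow> real \<Rightarrow> real \<Rightarrow> real" where
  "payA L a b v = (if alice_wins L a b then v - a else 0)"

definition payB :: "real \<Rightarrow> real \<Rightarrow> real \<Rightarrow> real \<Rightarrow> real" where
  "payB L a b v = (if bob_wins L a b then v - b else 0)"

definition value_dist :: "(real \<Rightarrow> real) \<Rightarrow> real measure" where
  "value_dist f = density lborel (\<lambda>x. ennreal (f x))"

text \<open>Alice's expected payoff from the pure bid a, when Bob uses the
  (behaviour / mixed) strategy \<sigma>: value v \<mapsto> distribution of Bob's bid.\<close>
definition EU_A :: "(real \<Rightarrow> real) \<Rightarrow> real \<Rightarrow> (real \<Rightarrow> real measure) \<Rightarrow> real \<Rightarrow> real" where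
  "EU_A f L \<sigma> a = (\<integral>v. (\<integral>b. payA L a b v \<partial>(\<sigma> v)) \<partial>(value_dist f))"

text \<open>Bob, not observing
  Alice's bid, correctly believes it to be a, and must be optimal at every
  information set v in the support; Alice's bid must be optimal given \<sigma>.\<close>
definition pbne_alice_pure ::
  "(real \<Rightarrow> real) \<Rightarrow> real \<Rightarrow> real \<Rightarrow> (real \<Rightarrow> real measure) \<Rightarrow> bool" where
  "pbne_alice_pure f L a \<sigma> \<longleftrightarrow>
     a \<ge> 0 \<and>
     \<sigma> \<in> borel \<rightarrow>\<^sub>M prob_algebra borel \<and>
     (\<forall>v. AE b in \<sigma> v. b \<ge> 0) \<and>
     (\<forall>v\<ge>0. integrable (\<sigma> v) (\<lambda>b. payB L a b v) \<and>
        (\<forall>b'\<ge>0. (\<integral>b. payB L a b v \<partial>(\<sigma> v)) \<ge> payB L a b' v)) \<and>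
     (\<forall>a'\<ge>0. EU_A f L \<sigma> a \<ge> EU_A f L \<sigma> a')"

end

theory Submission
  imports Defs
begin

(* Against Alice's pure bid a, Bob's best reply at value v earns exactly max (v - max a L) 0, and
   since no bid earns more, his mixed reply earns this almost surely.  Hence Alice never wins at a
   profit: her bid a earns E[min (v - a) 0] if a > L and nothing otherwise.  A bid slightly above
   max a L always wins against such a reply and earns E[v] minus the bid, which is strictly more,
   because E[v] > L and, by full support, v > a with positive probability. *)

lemma payA_eq_indicator: "payA L x b v = indicator {b. b < x \<and> L < x} b * (v - x)"
  by (auto simp: payA_def alice_wins_def indicator_def)

lemma payB_le_max: "payB L a b v \<le> max (v - max a L) 0"
  by (auto simp: payB_def bob_wins_def)

lemma payB_max_attained:
  assumes "0 \<le> v" "0 \<le> a" "0 \<le> L"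
  shows "\<exists>b\<ge>0. payB L a b v = max (v - max a L) 0"
proof (cases "max a L \<le> v")
  case True
  then have "payB L a (max a L) v = max (v - max a L) 0"
    by (auto simp: payB_def bob_wins_def)
  then show ?thesis using assms by (metis max.coboundedI1)
next
  case False
  then have "payB L a 0 v = max (v - max a L) 0"
    using assms by (auto simp: payB_def bob_wins_def)
  then show ?thesis by blast
qed

lemma payA_against_best_response:
  "payB L a b v = max (v - max a L) 0 \<Longrightarrow> payA L a b v = (if L < a then min (v - a) 0 else 0)"
  by (auto simp: payB_def bob_wins_def payA_def alice_wins_def split: if_splits)

lemma payA_overbid_best_response:
  "payB L a b v = max (v - max a L) 0 \<Longrightarrow> max a L < a' \<Longrightarrow> payA L a' b v = v - a'"
  by (auto simp: payB_def bob_wins_def payA_def alice_wins_def split: if_splits)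

lemma (in prob_space) AE_eq_bound_if_integral_ge:
  fixes g :: "'a \<Rightarrow> real"
  assumes g: "integrable M g" and le: "AE x in M. g x \<le> c" and ge: "c \<le> (\<integral>x. g x \<partial>M)"
  shows "AE x in M. g x = c"
proof -
  have nonneg: "AE x in M. 0 \<le> c - g x"
    using le by eventually_elim simp
  have "(\<integral>x. c - g x \<partial>M) = c - (\<integral>x. g x \<partial>M)"
    using g by (simp add: prob_space)
  then have "(\<integral>x. c - g x \<partial>M) = 0"
    using ge integral_nonneg_AE[OF nonneg] by linarith
  then have "AE x in M. c - g x = 0"
    using integral_nonneg_eq_0_iff_AE[OF _ nonneg] g by auto
  then show ?thesis by eventually_elim simp
qed

lemma integral_min_less_mean:
  fixes M :: "real measure" and a :: real
  assumes "prob_space M" and int: "integrable M (\<lambda>v. v)"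
    and events: "{a<..} \<in> sets M" and pos: "measure M {a<..} > 0"
  shows "(\<integral>v. min (v - a) 0 \<partial>M) < (\<integral>v. v \<partial>M) - a"
proof -
  interpret prob_space M by fact
  have int_max: "integrable M (\<lambda>v. max (v - a) 0)"
    using int by auto
  have "(\<integral>v. max (v - a) 0 \<partial>M) \<noteq> 0"
  proof
    assume "(\<integral>v. max (v - a) 0 \<partial>M) = 0"
    then have "AE v in M. v \<notin> {a<..}"
      using integral_nonneg_eq_0_iff_AE[OF int_max] by (auto elim: AE_mp)
    then show False
      using pos prob_eq_0[OF events] by simp
  qed
  moreover have "(\<integral>v. max (v - a) 0 \<partial>M) \<ge> 0"
    by (rule integral_nonneg_AE) simp
  ultimately have "(\<integral>v. max (v - a) 0 \<partial>M) > 0"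
    by linarith
  moreover have "(\<integral>v. min (v - a) 0 \<partial>M) = (\<integral>v. v \<partial>M) - a - (\<integral>v. max (v - a) 0 \<partial>M)"
  proof -
    have "(\<lambda>v. min (v - a) 0) = (\<lambda>v. v - a - max (v - a) 0)"
      by (auto simp: fun_eq_iff)
    then show ?thesis
      using int int_max by (simp add: prob_space)
  qed
  ultimately show ?thesis by linarith
qed

lemma AE_value_dist_nonneg:
  assumes "f \<in> borel_measurable borel" "\<And>x. x < 0 \<Longrightarrow> f x = 0"
  shows "AE v in value_dist f. 0 \<le> v"
proof -
  have "0 \<le> v" if "0 < f v" for v
    using assms(2)[of v] that by force
  then show ?thesis
    unfolding value_dist_def using assms(1) by (subst AE_density) (auto intro!: AE_I2)
qed

lemma prob_space_kernel:
  "\<sigma> \<in> borel \<rightarrow>\<^sub>M prob_algebra borel \<Longrightarrow> prob_space (\<sigma> v) \<and> sets (\<sigma> v) = sets borel"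
  using measurable_space[of \<sigma> borel "prob_algebra borel" v] by (simp add: space_prob_algebra)

lemma borel_measurable_payA: "(\<lambda>b. payA L x b v) \<in> borel_measurable borel"
  unfolding payA_def alice_wins_def by measurable

lemma integral_payA:
  assumes "prob_space M" "sets M = sets borel"
  shows "(\<integral>b. payA L x b v \<partial>M) = measure M {b. b < x \<and> L < x} * (v - x)"
proof -
  have "{b::real. b < x \<and> L < x} \<in> sets M"
    using assms(2) by measurable
  then show ?thesis
    unfolding payA_eq_indicator by (simp add: integral_mult_left_zero)
qed

lemma measurable_integral_payA:
  assumes \<sigma>: "\<sigma> \<in> borel \<rightarrow>\<^sub>M prob_algebra borel"
  shows "(\<lambda>v. \<integral>b. payA L x b v \<partial>(\<sigma> v)) \<in> borel_measurable borel"
proof -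
  have A: "{b::real. b < x \<and> L < x} \<in> sets borel"
    by measurable
  have M: "(\<lambda>v. measure (\<sigma> v) {b. b < x \<and> L < x}) \<in> borel_measurable borel"
    by (rule measurable_compose[OF \<sigma> measurable_measure_prob_algebra[OF A]])
  have eq: "(\<lambda>v. \<integral>b. payA L x b v \<partial>(\<sigma> v)) = (\<lambda>v. measure (\<sigma> v) {b. b < x \<and> L < x} * (v - x))"
    using prob_space_kernel[OF \<sigma>] integral_payA by blast
  show ?thesis
    unfolding eq by (intro borel_measurable_times M) simp
qed

lemma EU_A_eq_integral_if_AE:
  assumes \<sigma>: "\<sigma> \<in> borel \<rightarrow>\<^sub>M prob_algebra borel"
    and nonneg: "AE v in value_dist f. 0 \<le> v"
    and g: "g \<in> borel_measurable borel"
    and AE_g: "\<And>v. 0 \<le> v \<Longrightarrow> AE b in \<sigma> v. payA L x b v = g v"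
  shows "EU_A f L \<sigma> x = (\<integral>v. g v \<partial>value_dist f)"
  unfolding EU_A_def
proof (rule integral_cong_AE)
  have inner: "(\<integral>b. payA L x b v \<partial>(\<sigma> v)) = g v" if "0 \<le> v" for v
  proof -
    interpret prob_space "\<sigma> v"
      using prob_space_kernel[OF \<sigma>] by blast
    have "(\<integral>b. payA L x b v \<partial>(\<sigma> v)) = (\<integral>b. g v \<partial>(\<sigma> v))"
    proof (rule integral_cong_AE)
      show "(\<lambda>b. payA L x b v) \<in> borel_measurable (\<sigma> v)"
        using borel_measurable_payA prob_space_kernel[OF \<sigma>, of v] measurable_cong_sets by blast
    qed (use AE_g[OF that] in simp_all)
    then show ?thesis
      by (simp add: prob_space)
  qed
  show "AE v in value_dist f. (\<integral>b. payA L x b v \<partial>(\<sigma> v)) = g v"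
    using nonneg by eventually_elim (rule inner)
qed (use measurable_integral_payA[OF \<sigma>] g in \<open>simp_all add: value_dist_def\<close>)

lemma bob_best_response_AE:
  assumes eq: "pbne_alice_pure f L a \<sigma>" and "0 \<le> L" "0 \<le> v"
  shows "AE b in \<sigma> v. payB L a b v = max (v - max a L) 0"
proof -
  have \<sigma>: "\<sigma> \<in> borel \<rightarrow>\<^sub>M prob_algebra borel" and "0 \<le> a"
    and int: "integrable (\<sigma> v) (\<lambda>b. payB L a b v)"
    and opt: "\<And>b'. 0 \<le> b' \<Longrightarrow> payB L a b' v \<le> (\<integral>b. payB L a b v \<partial>(\<sigma> v))"
    using eq \<open>0 \<le> v\<close> unfolding pbne_alice_pure_def by auto
  interpret prob_space "\<sigma> v"
    using prob_space_kernel[OF \<sigma>] by blast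
  obtain b' where "0 \<le> b'" and b': "payB L a b' v = max (v - max a L) 0"
    using payB_max_attained \<open>0 \<le> a\<close> assms by blast
  show ?thesis
  proof (rule AE_eq_bound_if_integral_ge[OF int])
    show "AE b in \<sigma> v. payB L a b v \<le> max (v - max a L) 0"
      by (simp add: payB_le_max)
    show "max (v - max a L) 0 \<le> (\<integral>b. payB L a b v \<partial>(\<sigma> v))"
      using opt[OF \<open>0 \<le> b'\<close>] by (simp only: b')
  qed
qed

lemma EU_A_equilibrium_bid:
  assumes eq: "pbne_alice_pure f L a \<sigma>" and "0 \<le> L" and nonneg: "AE v in value_dist f. 0 \<le> v"
  shows "EU_A f L \<sigma> a = (\<integral>v. (if L < a then min (v - a) 0 else 0) \<partial>value_dist f)"
proof (rule EU_A_eq_integral_if_AE[OF _ nonneg])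
  show "\<sigma> \<in> borel \<rightarrow>\<^sub>M prob_algebra borel"
    using eq unfolding pbne_alice_pure_def by blast
  show "AE b in \<sigma> v. payA L a b v = (if L < a then min (v - a) 0 else 0)" if "0 \<le> v" for v
    using bob_best_response_AE[OF eq \<open>0 \<le> L\<close> that]
    by eventually_elim (rule payA_against_best_response)
qed measurable

lemma EU_A_overbid:
  assumes eq: "pbne_alice_pure f L a \<sigma>" and "0 \<le> L" and overbid: "max a L < a'"
    and nonneg: "AE v in value_dist f. 0 \<le> v"
    and "prob_space (value_dist f)" and mean_finite: "integrable (value_dist f) (\<lambda>v. v)"
  shows "EU_A f L \<sigma> a' = (\<integral>v. v \<partial>value_dist f) - a'"
proof -
  interpret prob_space "value_dist f" by fact
  have "EU_A f L \<sigma> a' = (\<integral>v. v - a' \<partial>value_dist f)"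
  proof (rule EU_A_eq_integral_if_AE[OF _ nonneg])
    show "\<sigma> \<in> borel \<rightarrow>\<^sub>M prob_algebra borel"
      using eq unfolding pbne_alice_pure_def by blast
    show "AE b in \<sigma> v. payA L a' b v = v - a'" if "0 \<le> v" for v
      using bob_best_response_AE[OF eq \<open>0 \<le> L\<close> that]
      by eventually_elim (rule payA_overbid_best_response[OF _ overbid])
  qed measurable
  then show ?thesis
    using mean_finite by (simp add: prob_space)
qed

lemma EU_A_equilibrium_bid_less:
  assumes eq: "pbne_alice_pure f L a \<sigma>" and "0 \<le> L" and nonneg: "AE v in value_dist f. 0 \<le> v"
    and prob: "prob_space (value_dist f)" and mean_finite: "integrable (value_dist f) (\<lambda>v. v)"
    and mean_gt: "L < (\<integral>v. v \<partial>value_dist f)" and pos: "0 < measure (value_dist f) {a<..}"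
  shows "EU_A f L \<sigma> a < (\<integral>v. v \<partial>value_dist f) - max a L"
proof (cases "L < a")
  case True
  have "{a<..} \<in> sets (value_dist f)"
    by (simp add: value_dist_def)
  then show ?thesis
    using integral_min_less_mean[OF prob mean_finite _ pos] True
    by (simp add: EU_A_equilibrium_bid[OF eq \<open>0 \<le> L\<close> nonneg])
qed (use mean_gt in \<open>simp add: EU_A_equilibrium_bid[OF eq \<open>0 \<le> L\<close> nonneg]\<close>)

theorem lemma1:
  fixes f :: "real \<Rightarrow> real" and L :: real
  assumes f_meas: "f \<in> borel_measurable borel"
    and f_nonneg: "\<And>x. f x \<ge> 0"
    and prob: "prob_space (value_dist f)"
    and supp_nonneg: "\<And>x. x < 0 \<Longrightarrow> f x = 0"
    and supp_full: "\<And>x e. x \<ge> 0 \<Longrightarrow> e > 0 \<Longrightarrow> measure (value_dist f) {x - e <..< x + e} > 0"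
    and mean_finite: "integrable (value_dist f) (\<lambda>v. v)"
    and mean_gt: "(\<integral>v. v \<partial>(value_dist f)) > L"
    and L_nonneg: "L \<ge> 0"
  shows "\<not> (\<exists>a \<sigma>. pbne_alice_pure f L a \<sigma>)"
proof
  assume "\<exists>a \<sigma>. pbne_alice_pure f L a \<sigma>"
  then obtain a \<sigma> where eq: "pbne_alice_pure f L a \<sigma>" by blast
  interpret P: prob_space "value_dist f" by (rule prob)
  let ?m = "max a L"
  let ?Ev = "\<integral>v. v \<partial>(value_dist f)"
  have "0 \<le> a" and alice_opt: "\<And>a'. 0 \<le> a' \<Longrightarrow> EU_A f L \<sigma> a' \<le> EU_A f L \<sigma> a"
    using eq unfolding pbne_alice_pure_def by auto
  have nonneg: "AE v in value_dist f. 0 \<le> v"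
    using f_meas supp_nonneg by (rule AE_value_dist_nonneg)
  have "0 < measure (value_dist f) {a + 1 - 1 <..< a + 1 + 1}"
    using supp_full[of "a + 1" 1] \<open>0 \<le> a\<close> by simp
  also have "\<dots> \<le> measure (value_dist f) {a<..}"
    by (rule P.finite_measure_mono) (auto simp: value_dist_def)
  finally have gap: "EU_A f L \<sigma> a < ?Ev - ?m"
    using EU_A_equilibrium_bid_less[OF eq L_nonneg nonneg prob mean_finite mean_gt] by blast
  define a' where "a' = (?m + (?Ev - EU_A f L \<sigma> a)) / 2"
  have "?m < a'" and "EU_A f L \<sigma> a < ?Ev - a'"
    using gap unfolding a'_def by (simp_all add: field_simps)
  moreover have "EU_A f L \<sigma> a' = ?Ev - a'"
    by (rule EU_A_overbid[OF eq L_nonneg \<open>?m < a'\<close> nonneg prob mean_finite])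
  ultimately show False
    using alice_opt[of a'] \<open>0 \<le> a\<close> by linarith
qed

end
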